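(* Let $C$ be a contractible globular extension with a pregroupoidal structure and $G$ an $\infty$-groupoid of type $C$. For every $n\ge 1$, $\Pi_n(G)$ is a groupoid.
   Context: The globe category $\mathbb{G}$ has objects $D_n$ ($n\ge0$), generated by $\sigma_n,\tau_n\colon D_{n-1}\to D_n$ ($n\ge1$) with $\sigma_{n+1}\sigma_n=\tau_{n+1}\sigma_n$, $\sigma_{n+1}\tau_n=\tau_{n+1}\tau_n$; $\sigma^i_j=\sigma_i\cdots\sigma_{j+1}$, $\tau^i_j=\tau_i\cdots\tau_{j+1}$. A table of dimensions: integers $i_1,\dots,i_n,i'_1,\dots,i'_{n-1}$ with $i_k>i'_k<i_{k+1}$; dimension = largest entry. In a category $C$ under $\mathbb{G}$, its globular sum is the colimit of $D_{i_1}\xleftarrow{\sigma^{i_1}_{i'_1}}D_{i'_1}\xrightarrow{\tau^{i_2}_{i'_1}}D_{i_2}\leftarrow\cdots\xrightarrow{\tau^{i_n}_{i'_{n-1}}}D_{i_n}$, written $D_{i_1}\amalg_{D_{i'_1}}\cdots\amalg_{D_{i'_{n-1}}}D_{i_n}$. A globular extension is a category under $\mathbb{G}$ with all globular sums. $f,g\colon D_n\to X$ are globularly parallel if $n=0$ or $f\sigma_n=g\sigma_n$, $f\tau_n=g\tau_n$; a lifting of $(f,g)$ is $h\colon D_{n+1}\to X$ with $h\sigma_{n+1}=f$, $h\tau_{n+1}=g$; $(f,g)\colon D_n\to S$ is admissible if globularly parallel with $S$ a globular sum of dimension $\le n+1$; $C$ is contractible if every admissible pair has a lifting. An $\infty$-groupoid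 of type $C$ is a presheaf $G$ on $C$ such that each canonical map $G(D_{i_1}\amalg_{D_{i'_1}}\cdots\amalg_{D_{i'_{n-1}}}D_{i_n})\to G_{i_1}\times_{G_{i'_1}}\cdots\times_{G_{i'_{n-1}}}G_{i_n}$ is bijective, where $G_i=G(D_i)$ ($i$-arrows), $s=G(\sigma_i)$, $t=G(\tau_i)$ (source, target), $s^i_j=G(\sigma^i_j)$, $t^i_j=G(\tau^i_j)$, and the fiber product consists of $(u_1,\dots,u_n)$ with $s^{i_k}_{i'_k}(u_k)=t^{i_{k+1}}_{i'_k}(u_{k+1})$. A pregroupoidal structure on $C$ consists of morphisms $\nabla^i_j\colon D_i\to D_i\amalg_{D_j}D_i$ ($i>j\ge0$), $\kappa_i\colon D_{i+1}\to D_i$, $w^i_j\colon D_i\to D_i$ with $\nabla^i_{i-1}\sigma_i=\epsilon_2\sigma_i$, $\nabla^i_{i-1}\tau_i=\epsilon_1\tau_i$ ($\epsilon_1,\epsilon_2$ the canonical inclusions of the first and second summand), $\nabla^i_j\sigma_i=(\sigma_i\amalg_{D_j}\sigma_i)\nabla^{i-1}_j$, $\nabla^i_j\tau_i=(\tau_i\amalg_{D_j}\tau_i)\nabla^{i-1}_j$ for $j<i-1$, $\kappa_i\sigma_{i+1}=\kappa_i\tau_{i+1}=\mathrm{id}$, $w^i_{i-1}\sigma_i=\tau_i$, $w^i_{i-1}\tau_i=\sigma_i$, $w^i_j\sigma_i=\sigma_iw^{i-1}_j$, $w^i_j\tau_i=\tau_iw^{i-1}_j$ for $j<i-1$. It induces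 on $G$: compositions $v\ast^i_ju=G(\nabla^i_j)(\xi)$ for $s^i_j(v)=t^i_j(u)$, $\xi$ corresponding to $(v,u)$; units $k_i=G(\kappa_i)\colon G_i\to G_{i+1}$. For $n$-arrows $u,v$, $u\sim v$ if some $(n+1)$-arrow has source $u$ and target $v$; this is an equivalence relation compatible with $\ast^n_{n-1}$. $\Pi_n(G)$ ($n\ge1$) is the graph with objects $G_{n-1}$, arrows $G_n/\sim$ with source/target induced by $s,t$, composition induced by $\ast^n_{n-1}$ and identities induced by $k_{n-1}$. *)

theory Defs
  imports Main
begin

text \<open>A category under the globe category together with a chosen globular sum for every
table of dimensions. Composition convention: Cmp g f is g after f.\<close>

record ('o, 'm) gext =
  Ob  :: "'o set"
  Ar  :: "'m set"
  Dom :: "'m \<Rightarrow> 'o"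
  Cod :: "'m \<Rightarrow> 'o"
  Cmp :: "'m \<Rightarrow> 'm \<Rightarrow> 'm"
  Idm :: "'o \<Rightarrow> 'm"
  Dg  :: "nat \<Rightarrow> 'o"            \<comment> \<open>image of D_n\<close>
  sg  :: "nat \<Rightarrow> 'm"            \<comment> \<open>image of sigma_n : D_(n-1) -> D_n, n >= 1\<close>
  tu  :: "nat \<Rightarrow> 'm"            \<comment> \<open>image of tau_n : D_(n-1) -> D_n, n >= 1\<close>
  gs  :: "nat list \<times> nat list \<Rightarrow> 'o"          \<comment> \<open>chosen globular sum of a table\<close>
  gi  :: "nat list \<times> nat list \<Rightarrow> nat \<Rightarrow> 'm"  \<comment> \<open>its canonical inclusions (0-indexed)\<close>

definition hom :: "('o, 'm) gext \<Rightarrow> 'o \<Rightarrow> 'o \<Rightarrow> 'm set" where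
  "hom C a b = {f \<in> Ar C. Dom C f = a \<and> Cod C f = b}"

definition is_category :: "('o, 'm) gext \<Rightarrow> bool" where
  "is_category C \<longleftrightarrow>
     (\<forall>f \<in> Ar C. Dom C f \<in> Ob C \<and> Cod C f \<in> Ob C) \<and>
     (\<forall>a \<in> Ob C. Idm C a \<in> hom C a a) \<and>
     (\<forall>f \<in> Ar C. \<forall>g \<in> Ar C. Dom C g = Cod C f \<longrightarrow> Cmp C g f \<in> hom C (Dom C f) (Cod C g)) \<and>
     (\<forall>f \<in> Ar C. Cmp C f (Idm C (Dom C f)) = f \<and> Cmp C (Idm C (Cod C f)) f = f) \<and>
     (\<forall>f \<in> Ar C. \<forall>g \<in> Ar C. \<forall>h \<in> Ar C. Dom C g = Cod C f \<longrightarrow> Dom C h = Cod C g \<longrightarrow>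
        Cmp C h (Cmp C g f) = Cmp C (Cmp C h g) f)"

text \<open>A functor from the globe category: by its presentation, this is the data of objects
D_n and arrows sigma_n, tau_n : D_(n-1) -> D_n satisfying the globular relations.\<close>

definition under_globe :: "('o, 'm) gext \<Rightarrow> bool" where
  "under_globe C \<longleftrightarrow>
     (\<forall>n. Dg C n \<in> Ob C) \<and>
     (\<forall>n \<ge> 1. sg C n \<in> hom C (Dg C (n - 1)) (Dg C n) \<and> tu C n \<in> hom C (Dg C (n - 1)) (Dg C n)) \<and>
     (\<forall>n \<ge> 1. Cmp C (sg C (n + 1)) (sg C n) = Cmp C (tu C (n + 1)) (sg C n) \<and>
              Cmp C (sg C (n + 1)) (tu C n) = Cmp C (tu C (n + 1)) (tu C n))"

text \<open>Iterated sources/targets: sigma^i_j = sigma_i ... sigma_(j+1) : D_j -> D_i (identity if i = j).\<close>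

fun sgit :: "('o, 'm) gext \<Rightarrow> nat \<Rightarrow> nat \<Rightarrow> 'm" where
  "sgit C 0 j = Idm C (Dg C j)"
| "sgit C (Suc i) j = (if Suc i \<le> j then Idm C (Dg C j) else Cmp C (sg C (Suc i)) (sgit C i j))"

fun tuit :: "('o, 'm) gext \<Rightarrow> nat \<Rightarrow> nat \<Rightarrow> 'm" where
  "tuit C 0 j = Idm C (Dg C j)"
| "tuit C (Suc i) j = (if Suc i \<le> j then Idm C (Dg C j) else Cmp C (tu C (Suc i)) (tuit C i j))"

definition table :: "nat list \<times> nat list \<Rightarrow> bool" where
  "table T \<longleftrightarrow> (let is = fst T; js = snd T in
     length is = length js + 1 \<and>
     (\<forall>k < length js. js ! k < is ! k \<and> js ! k < is ! (k + 1)))"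

definition table_dim :: "nat list \<times> nat list \<Rightarrow> nat" where
  "table_dim T = Max (set (fst T) \<union> set (snd T))"

definition cocone :: "('o, 'm) gext \<Rightarrow> nat list \<times> nat list \<Rightarrow> 'o \<Rightarrow> (nat \<Rightarrow> 'm) \<Rightarrow> bool" where
  "cocone C T X c \<longleftrightarrow> (let is = fst T; js = snd T in
     (\<forall>k < length is. c k \<in> hom C (Dg C (is ! k)) X) \<and>
     (\<forall>k < length js. Cmp C (c k) (sgit C (is ! k) (js ! k)) =
                      Cmp C (c (k + 1)) (tuit C (is ! (k + 1)) (js ! k))))"

definition is_colimit :: "('o, 'm) gext \<Rightarrow> nat list \<times> nat list \<Rightarrow> 'o \<Rightarrow> (nat \<Rightarrow> 'm) \<Rightarrow> bool" where
  "is_colimit C T S \<iota> \<longleftrightarrow> S \<in> Ob C \<and> cocone C T S \<iota> \<and>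
     (\<forall>X \<in> Ob C. \<forall>c. cocone C T X c \<longrightarrow>
        (\<exists>!h. h \<in> hom C S X \<and> (\<forall>k < length (fst T). Cmp C h (\<iota> k) = c k)))"

definition globular_extension :: "('o, 'm) gext \<Rightarrow> bool" where
  "globular_extension C \<longleftrightarrow> is_category C \<and> under_globe C \<and>
     (\<forall>T. table T \<longrightarrow> is_colimit C T (gs C T) (gi C T))"

definition glob_parallel :: "('o, 'm) gext \<Rightarrow> nat \<Rightarrow> 'm \<Rightarrow> 'm \<Rightarrow> bool" where
  "glob_parallel C n f g \<longleftrightarrow> n = 0 \<or>
     (Cmp C f (sg C n) = Cmp C g (sg C n) \<and> Cmp C f (tu C n) = Cmp C g (tu C n))"

definition contractible :: "('o, 'm) gext \<Rightarrow> bool" where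
  "contractible C \<longleftrightarrow>
     (\<forall>n T f g. table T \<and> table_dim T \<le> n + 1 \<and>
        f \<in> hom C (Dg C n) (gs C T) \<and> g \<in> hom C (Dg C n) (gs C T) \<and> glob_parallel C n f g \<longrightarrow>
        (\<exists>h \<in> hom C (Dg C (n + 1)) (gs C T).
            Cmp C h (sg C (n + 1)) = f \<and> Cmp C h (tu C (n + 1)) = g))"

text \<open>The binary globular sum D_i amalg_(D_j) D_i and the map sigma_i amalg sigma_i
(resp. tau_i amalg tau_i) : D_(i-1) amalg_(D_j) D_(i-1) -> D_i amalg_(D_j) D_i.\<close>

abbreviation bin :: "nat \<Rightarrow> nat \<Rightarrow> nat list \<times> nat list" where
  "bin i j \<equiv> ([i, i], [j])"

definition amalg_map :: "('o, 'm) gext \<Rightarrow> (nat \<Rightarrow> 'm) \<Rightarrow> nat \<Rightarrow> nat \<Rightarrow> 'm" where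
  "amalg_map C m i j = (THE h. h \<in> hom C (gs C (bin (i - 1) j)) (gs C (bin i j)) \<and>
      Cmp C h (gi C (bin (i - 1) j) 0) = Cmp C (gi C (bin i j) 0) (m i) \<and>
      Cmp C h (gi C (bin (i - 1) j) 1) = Cmp C (gi C (bin i j) 1) (m i))"

record 'm pregrp =
  nab :: "nat \<Rightarrow> nat \<Rightarrow> 'm"
  kap :: "nat \<Rightarrow> 'm"
  ww  :: "nat \<Rightarrow> nat \<Rightarrow> 'm"

definition pregroupoidal :: "('o, 'm) gext \<Rightarrow> 'm pregrp \<Rightarrow> bool" where
  "pregroupoidal C P \<longleftrightarrow>
     (\<forall>i j. j < i \<longrightarrow> nab P i j \<in> hom C (Dg C i) (gs C (bin i j)) \<and> ww P i j \<in> hom C (Dg C i) (Dg C i)) \<and>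
     (\<forall>i. kap P i \<in> hom C (Dg C (i + 1)) (Dg C i)) \<and>
     (\<forall>i \<ge> 1.
        Cmp C (nab P i (i - 1)) (sg C i) = Cmp C (gi C (bin i (i - 1)) 1) (sg C i) \<and>
        Cmp C (nab P i (i - 1)) (tu C i) = Cmp C (gi C (bin i (i - 1)) 0) (tu C i)) \<and>
     (\<forall>i j. j + 1 < i \<longrightarrow>
        Cmp C (nab P i j) (sg C i) = Cmp C (amalg_map C (sg C) i j) (nab P (i - 1) j) \<and>
        Cmp C (nab P i j) (tu C i) = Cmp C (amalg_map C (tu C) i j) (nab P (i - 1) j)) \<and>
     (\<forall>i. Cmp C (kap P i) (sg C (i + 1)) = Idm C (Dg C i) \<and>
          Cmp C (kap P i) (tu C (i + 1)) = Idm C (Dg C i)) \<and>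
     (\<forall>i \<ge> 1. Cmp C (ww P i (i - 1)) (sg C i) = tu C i \<and>
              Cmp C (ww P i (i - 1)) (tu C i) = sg C i) \<and>
     (\<forall>i j. j + 1 < i \<longrightarrow>
        Cmp C (ww P i j) (sg C i) = Cmp C (sg C i) (ww P (i - 1) j) \<and>
        Cmp C (ww P i j) (tu C i) = Cmp C (tu C i) (ww P (i - 1) j))"

text \<open>A presheaf (contravariant set-valued functor) on C: Gob a is G(a), Gar f is G(f).\<close>

definition presheaf :: "('o, 'm) gext \<Rightarrow> ('o \<Rightarrow> 'x set) \<Rightarrow> ('m \<Rightarrow> 'x \<Rightarrow> 'x) \<Rightarrow> bool" where
  "presheaf C Gob Gar \<longleftrightarrow>
     (\<forall>f \<in> Ar C. \<forall>x \<in> Gob (Cod C f). Gar f x \<in> Gob (Dom C f)) \<and>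
     (\<forall>a \<in> Ob C. \<forall>x \<in> Gob a. Gar (Idm C a) x = x) \<and>
     (\<forall>f \<in> Ar C. \<forall>g \<in> Ar C. Dom C g = Cod C f \<longrightarrow>
        (\<forall>x \<in> Gob (Cod C g). Gar (Cmp C g f) x = Gar f (Gar g x)))"

definition fiber_prod :: "('o, 'm) gext \<Rightarrow> ('o \<Rightarrow> 'x set) \<Rightarrow> ('m \<Rightarrow> 'x \<Rightarrow> 'x) \<Rightarrow>
    nat list \<times> nat list \<Rightarrow> 'x list set" where
  "fiber_prod C Gob Gar T = (let is = fst T; js = snd T in
     {us. length us = length is \<and> (\<forall>k < length is. us ! k \<in> Gob (Dg C (is ! k))) \<and>
          (\<forall>k < length js. Gar (sgit C (is ! k) (js ! k)) (us ! k) =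
                           Gar (tuit C (is ! (k + 1)) (js ! k)) (us ! (k + 1)))})"

definition infty_groupoid :: "('o, 'm) gext \<Rightarrow> ('o \<Rightarrow> 'x set) \<Rightarrow> ('m \<Rightarrow> 'x \<Rightarrow> 'x) \<Rightarrow> bool" where
  "infty_groupoid C Gob Gar \<longleftrightarrow> presheaf C Gob Gar \<and>
     (\<forall>T. table T \<longrightarrow>
        bij_betw (\<lambda>x. map (\<lambda>k. Gar (gi C T k) x) [0..<length (fst T)])
                 (Gob (gs C T)) (fiber_prod C Gob Gar T))"

text \<open>Composition v *^i_j u = G(nabla^i_j)(xi), xi the element of G(D_i amalg_(D_j) D_i)
corresponding to (v, u).\<close>

definition gcomp :: "('o, 'm) gext \<Rightarrow> 'm pregrp \<Rightarrow> ('o \<Rightarrow> 'x set) \<Rightarrow> ('m \<Rightarrow> 'x \<Rightarrow> 'x) \<Rightarrow>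
    nat \<Rightarrow> nat \<Rightarrow> 'x \<Rightarrow> 'x \<Rightarrow> 'x" where
  "gcomp C P Gob Gar i j v u = Gar (nab P i j)
     (THE \<xi>. \<xi> \<in> Gob (gs C (bin i j)) \<and> Gar (gi C (bin i j) 0) \<xi> = v \<and> Gar (gi C (bin i j) 1) \<xi> = u)"

definition sim_rel :: "('o, 'm) gext \<Rightarrow> ('o \<Rightarrow> 'x set) \<Rightarrow> ('m \<Rightarrow> 'x \<Rightarrow> 'x) \<Rightarrow> nat \<Rightarrow> ('x \<times> 'x) set" where
  "sim_rel C Gob Gar n = {(u, v). u \<in> Gob (Dg C n) \<and> v \<in> Gob (Dg C n) \<and>
      (\<exists>a \<in> Gob (Dg C (n + 1)). Gar (sg C (n + 1)) a = u \<and> Gar (tu C (n + 1)) a = v)}"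

definition Pi_obj :: "('o, 'm) gext \<Rightarrow> ('o \<Rightarrow> 'x set) \<Rightarrow> nat \<Rightarrow> 'x set" where
  "Pi_obj C Gob n = Gob (Dg C (n - 1))"

definition Pi_arr :: "('o, 'm) gext \<Rightarrow> ('o \<Rightarrow> 'x set) \<Rightarrow> ('m \<Rightarrow> 'x \<Rightarrow> 'x) \<Rightarrow> nat \<Rightarrow> 'x set set" where
  "Pi_arr C Gob Gar n = Gob (Dg C n) // sim_rel C Gob Gar n"

definition Pi_src :: "('o, 'm) gext \<Rightarrow> ('m \<Rightarrow> 'x \<Rightarrow> 'x) \<Rightarrow> nat \<Rightarrow> 'x set \<Rightarrow> 'x" where
  "Pi_src C Gar n X = the_elem (Gar (sg C n) ` X)"

definition Pi_tgt :: "('o, 'm) gext \<Rightarrow> ('m \<Rightarrow> 'x \<Rightarrow> 'x) \<Rightarrow> nat \<Rightarrow> 'x set \<Rightarrow> 'x" where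
  "Pi_tgt C Gar n X = the_elem (Gar (tu C n) ` X)"

definition Pi_comp :: "('o, 'm) gext \<Rightarrow> 'm pregrp \<Rightarrow> ('o \<Rightarrow> 'x set) \<Rightarrow> ('m \<Rightarrow> 'x \<Rightarrow> 'x) \<Rightarrow>
    nat \<Rightarrow> 'x set \<Rightarrow> 'x set \<Rightarrow> 'x set" where
  "Pi_comp C P Gob Gar n Y X = the_elem
     {sim_rel C Gob Gar n `` {gcomp C P Gob Gar n (n - 1) v u} | v u.
        v \<in> Y \<and> u \<in> X \<and> Gar (sg C n) v = Gar (tu C n) u}"

definition Pi_id :: "('o, 'm) gext \<Rightarrow> 'm pregrp \<Rightarrow> ('o \<Rightarrow> 'x set) \<Rightarrow> ('m \<Rightarrow> 'x \<Rightarrow> 'x) \<Rightarrow>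
    nat \<Rightarrow> 'x \<Rightarrow> 'x set" where
  "Pi_id C P Gob Gar n x = sim_rel C Gob Gar n `` {Gar (kap P (n - 1)) x}"

definition is_groupoid :: "'a set \<Rightarrow> 'b set \<Rightarrow> ('b \<Rightarrow> 'a) \<Rightarrow> ('b \<Rightarrow> 'a) \<Rightarrow>
    ('b \<Rightarrow> 'b \<Rightarrow> 'b) \<Rightarrow> ('a \<Rightarrow> 'b) \<Rightarrow> bool" where
  "is_groupoid Obj Arr src tgt cmp idn \<longleftrightarrow>
     (\<forall>f \<in> Arr. src f \<in> Obj \<and> tgt f \<in> Obj) \<and>
     (\<forall>x \<in> Obj. idn x \<in> Arr \<and> src (idn x) = x \<and> tgt (idn x) = x) \<and>
     (\<forall>f \<in> Arr. \<forall>g \<in> Arr. src g = tgt f \<longrightarrow>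
        cmp g f \<in> Arr \<and> src (cmp g f) = src f \<and> tgt (cmp g f) = tgt g) \<and>
     (\<forall>f \<in> Arr. \<forall>g \<in> Arr. \<forall>h \<in> Arr. src g = tgt f \<longrightarrow> src h = tgt g \<longrightarrow>
        cmp h (cmp g f) = cmp (cmp h g) f) \<and>
     (\<forall>f \<in> Arr. cmp f (idn (src f)) = f \<and> cmp (idn (tgt f)) f = f) \<and>
     (\<forall>f \<in> Arr. \<exists>g \<in> Arr. src g = tgt f \<and> tgt g = src f \<and>
        cmp g f = idn (src f) \<and> cmp f g = idn (tgt f))"

end

theory Submission
  imports Defs
begin

(* Write n = k+1.  The proof separates the formal part from the geometric one.
   (1) An abstract lemma (locale congruent_graph): if a graph on representatives carries a
       composition, identities and reversals whose category and inverse laws hold up to a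
       congruence, then the quotient graph is a groupoid.
   (2) Facts about globular extensions: the universal property of the binary globular sums
       D_i amalg_{D_j} D_i, the maps sigma amalg sigma and tau amalg tau, and the one- and three-term
       globular sums that are needed.
   (3) For an infinity-groupoid G, elements of G at a globular sum are compatible families of
       cells ("gluing"), naturally in maps out of the sum.
   (4) With a pregroupoidal structure: ~ is an equivalence relation (units kappa, reversals w,
       composition one dimension up), related cells are parallel, and composition respects ~.
   (5) With contractibility: two globularly parallel maps D_(k+1) -> S, dim S <= k+2, restrict
       every element of G(S) to ~-related cells; this gives the unit, inverse and associativity
       laws up to ~. *)

locale congruent_graph =
  fixes Obj :: "'a set" and A :: "'x set" and R :: "('x \<times> 'x) set"
    and s t :: "'x \<Rightarrow> 'a" and c :: "'x \<Rightarrow> 'x \<Rightarrow> 'x" and e :: "'a \<Rightarrow> 'x"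
    and inv :: "'x \<Rightarrow> 'x"
  assumes equiv_R: "equiv A R"
    and src_in: "u \<in> A \<Longrightarrow> s u \<in> Obj" and tgt_in: "u \<in> A \<Longrightarrow> t u \<in> Obj"
    and src_resp: "(u, v) \<in> R \<Longrightarrow> s u = s v" and tgt_resp: "(u, v) \<in> R \<Longrightarrow> t u = t v"
    and comp_in: "\<lbrakk>v \<in> A; u \<in> A; s v = t u\<rbrakk> \<Longrightarrow> c v u \<in> A"
    and comp_src: "\<lbrakk>v \<in> A; u \<in> A; s v = t u\<rbrakk> \<Longrightarrow> s (c v u) = s u"
    and comp_tgt: "\<lbrakk>v \<in> A; u \<in> A; s v = t u\<rbrakk> \<Longrightarrow> t (c v u) = t v"
    and comp_resp: "\<lbrakk>(v, v') \<in> R; (u, u') \<in> R; s v = t u\<rbrakk> \<Longrightarrow> (c v u, c v' u') \<in> R"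
    and unit_in: "x \<in> Obj \<Longrightarrow> e x \<in> A"
    and unit_src: "x \<in> Obj \<Longrightarrow> s (e x) = x" and unit_tgt: "x \<in> Obj \<Longrightarrow> t (e x) = x"
    and unit_right: "u \<in> A \<Longrightarrow> (c u (e (s u)), u) \<in> R"
    and unit_left: "u \<in> A \<Longrightarrow> (c (e (t u)) u, u) \<in> R"
    and comp_assoc: "\<lbrakk>w \<in> A; v \<in> A; u \<in> A; s w = t v; s v = t u\<rbrakk> \<Longrightarrow>
      (c (c w v) u, c w (c v u)) \<in> R"
    and inv_in: "u \<in> A \<Longrightarrow> inv u \<in> A"
    and inv_src: "u \<in> A \<Longrightarrow> s (inv u) = t u" and inv_tgt: "u \<in> A \<Longrightarrow> t (inv u) = s u"
    and inv_left: "u \<in> A \<Longrightarrow> (c (inv u) u, e (s u)) \<in> R"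
    and inv_right: "u \<in> A \<Longrightarrow> (c u (inv u), e (t u)) \<in> R"
begin

text \<open>The induced structure on classes, written exactly as in the definition of \<open>\<Pi>_n(G)\<close>.\<close>

abbreviation qsrc :: "'x set \<Rightarrow> 'a" where "qsrc X \<equiv> the_elem (s ` X)"
abbreviation qtgt :: "'x set \<Rightarrow> 'a" where "qtgt X \<equiv> the_elem (t ` X)"
abbreviation qcomp :: "'x set \<Rightarrow> 'x set \<Rightarrow> 'x set" where
  "qcomp Y X \<equiv> the_elem {R `` {c v u} | v u. v \<in> Y \<and> u \<in> X \<and> s v = t u}"
abbreviation qunit :: "'a \<Rightarrow> 'x set" where "qunit x \<equiv> R `` {e x}"

lemma class_eq: "(u, v) \<in> R \<Longrightarrow> R `` {u} = R `` {v}"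
  using equiv_class_eq[OF equiv_R] .

lemma self_in_class: "u \<in> A \<Longrightarrow> u \<in> R `` {u}"
  using equiv_R by (auto simp: equiv_def refl_on_def)

lemma qsrc_class: "u \<in> A \<Longrightarrow> qsrc (R `` {u}) = s u"
proof -
  assume u: "u \<in> A"
  have "s ` (R `` {u}) = {s u}"
  proof (intro equalityI subsetI)
    fix y assume "y \<in> s ` (R `` {u})"
    then obtain v where "(u, v) \<in> R" "y = s v" by blast
    then show "y \<in> {s u}" using src_resp by simp
  qed (use self_in_class[OF u] in blast)
  then show ?thesis by simp
qed

lemma qtgt_class: "u \<in> A \<Longrightarrow> qtgt (R `` {u}) = t u"
proof -
  assume u: "u \<in> A"
  have "t ` (R `` {u}) = {t u}"
  proof (intro equalityI subsetI)
    fix y assume "y \<in> t ` (R `` {u})"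
    then obtain v where "(u, v) \<in> R" "y = t v" by blast
    then show "y \<in> {t u}" using tgt_resp by simp
  qed (use self_in_class[OF u] in blast)
  then show ?thesis by simp
qed

lemma qcomp_class:
  assumes v: "v \<in> A" and u: "u \<in> A" and vu: "s v = t u"
  shows "qcomp (R `` {v}) (R `` {u}) = R `` {c v u}"
proof -
  have "{R `` {c v' u'} | v' u'. v' \<in> R `` {v} \<and> u' \<in> R `` {u} \<and> s v' = t u'} = {R `` {c v u}}"
  proof (intro equalityI subsetI)
    fix X assume "X \<in> {R `` {c v' u'} | v' u'. v' \<in> R `` {v} \<and> u' \<in> R `` {u} \<and> s v' = t u'}"
    then obtain v' u' where "X = R `` {c v' u'}" "(v, v') \<in> R" "(u, u') \<in> R" by blast
    then have "R `` {c v u} = X" using class_eq[OF comp_resp[OF _ _ vu]] by simp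
    then show "X \<in> {R `` {c v u}}" by simp
  next
    fix X assume "X \<in> {R `` {c v u}}"
    then show "X \<in> {R `` {c v' u'} | v' u'. v' \<in> R `` {v} \<and> u' \<in> R `` {u} \<and> s v' = t u'}"
      using self_in_class[OF v] self_in_class[OF u] vu by blast
  qed
  then show ?thesis by simp
qed

lemma quotient_comp:
  assumes v: "v \<in> A" and u: "u \<in> A" and vu: "s v = t u"
  shows "qcomp (R `` {v}) (R `` {u}) \<in> A // R"
    and "qsrc (qcomp (R `` {v}) (R `` {u})) = s u" and "qtgt (qcomp (R `` {v}) (R `` {u})) = t v"
  unfolding qcomp_class[OF v u vu] qsrc_class[OF comp_in[OF v u vu]] qtgt_class[OF comp_in[OF v u vu]]
  using comp_in[OF v u vu] comp_src[OF v u vu] comp_tgt[OF v u vu] by (simp_all add: quotientI)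

lemma quotient_assoc:
  assumes w: "w \<in> A" and v: "v \<in> A" and u: "u \<in> A" and wv: "s w = t v" and vu: "s v = t u"
  shows "qcomp (R `` {w}) (qcomp (R `` {v}) (R `` {u})) = qcomp (qcomp (R `` {w}) (R `` {v})) (R `` {u})"
proof -
  have w_vu: "s w = t (c v u)" using comp_tgt[OF v u vu] wv by simp
  have wv_u: "s (c w v) = t u" using comp_src[OF w v wv] vu by simp
  have "qcomp (R `` {w}) (qcomp (R `` {v}) (R `` {u})) = R `` {c w (c v u)}"
    unfolding qcomp_class[OF v u vu] using qcomp_class[OF w comp_in[OF v u vu] w_vu] .
  also have "\<dots> = R `` {c (c w v) u}"
    using class_eq[OF comp_assoc[OF w v u wv vu]] by simp
  also have "\<dots> = qcomp (qcomp (R `` {w}) (R `` {v})) (R `` {u})"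
    unfolding qcomp_class[OF w v wv] using qcomp_class[OF comp_in[OF w v wv] u wv_u] by simp
  finally show ?thesis .
qed

lemma quotient_units:
  assumes u: "u \<in> A"
  shows "qcomp (R `` {u}) (qunit (s u)) = R `` {u}" and "qcomp (qunit (t u)) (R `` {u}) = R `` {u}"
proof -
  have ks: "e (s u) \<in> A" and kt: "e (t u) \<in> A" using unit_in src_in tgt_in u by auto
  show "qcomp (R `` {u}) (qunit (s u)) = R `` {u}"
    unfolding qcomp_class[OF u ks unit_tgt[OF src_in[OF u], symmetric]]
    using class_eq[OF unit_right[OF u]] .
  show "qcomp (qunit (t u)) (R `` {u}) = R `` {u}"
    unfolding qcomp_class[OF kt u unit_src[OF tgt_in[OF u]]]
    using class_eq[OF unit_left[OF u]] .
qed

lemma quotient_inverse: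
  assumes u: "u \<in> A"
  shows "qcomp (R `` {inv u}) (R `` {u}) = qunit (s u)" and "qcomp (R `` {u}) (R `` {inv u}) = qunit (t u)"
  unfolding qcomp_class[OF inv_in[OF u] u inv_src[OF u]] qcomp_class[OF u inv_in[OF u] inv_tgt[OF u, symmetric]]
  using class_eq[OF inv_left[OF u]] class_eq[OF inv_right[OF u]] .

theorem quotient_groupoid: "is_groupoid Obj (A // R) qsrc qtgt qcomp qunit"
  unfolding is_groupoid_def
proof (intro conjI ballI impI)
  fix f assume "f \<in> A // R"
  then obtain u where u: "u \<in> A" and f: "f = R `` {u}" by (rule quotientE)
  show "qsrc f \<in> Obj" "qtgt f \<in> Obj"
    unfolding f qsrc_class[OF u] qtgt_class[OF u] using src_in[OF u] tgt_in[OF u] .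
  show "qcomp f (qunit (qsrc f)) = f" "qcomp (qunit (qtgt f)) f = f"
    unfolding f qsrc_class[OF u] qtgt_class[OF u] using quotient_units[OF u] .
  show "\<exists>g \<in> A // R. qsrc g = qtgt f \<and> qtgt g = qsrc f \<and>
      qcomp g f = qunit (qsrc f) \<and> qcomp f g = qunit (qtgt f)"
  proof (intro bexI conjI)
    show "R `` {inv u} \<in> A // R" using inv_in[OF u] by (rule quotientI)
    show "qsrc (R `` {inv u}) = qtgt f" "qtgt (R `` {inv u}) = qsrc f"
      unfolding f qsrc_class[OF u] qtgt_class[OF u] qsrc_class[OF inv_in[OF u]] qtgt_class[OF inv_in[OF u]]
      using inv_src[OF u] inv_tgt[OF u] .
    show "qcomp (R `` {inv u}) f = qunit (qsrc f)" "qcomp f (R `` {inv u}) = qunit (qtgt f)"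
      unfolding f qsrc_class[OF u] qtgt_class[OF u] using quotient_inverse[OF u] .
  qed
next
  fix x assume x: "x \<in> Obj"
  show "qunit x \<in> A // R" using unit_in[OF x] by (rule quotientI)
  show "qsrc (qunit x) = x" "qtgt (qunit x) = x"
    unfolding qsrc_class[OF unit_in[OF x]] qtgt_class[OF unit_in[OF x]] using unit_src[OF x] unit_tgt[OF x] .
next
  fix f g assume "f \<in> A // R" "g \<in> A // R" and gf: "qsrc g = qtgt f"
  then obtain u v where u: "u \<in> A" "f = R `` {u}" and v: "v \<in> A" "g = R `` {v}"
    by (metis quotientE)
  have vu: "s v = t u" using gf unfolding u(2) v(2) qsrc_class[OF v(1)] qtgt_class[OF u(1)] .
  show "qcomp g f \<in> A // R" "qsrc (qcomp g f) = qsrc f" "qtgt (qcomp g f) = qtgt g"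
    unfolding u(2) v(2) qsrc_class[OF u(1)] qtgt_class[OF v(1)] using quotient_comp[OF v(1) u(1) vu] .
next
  fix f g h assume "f \<in> A // R" "g \<in> A // R" "h \<in> A // R"
    and gf: "qsrc g = qtgt f" and hg: "qsrc h = qtgt g"
  then obtain u v w where u: "u \<in> A" "f = R `` {u}" and v: "v \<in> A" "g = R `` {v}"
    and w: "w \<in> A" "h = R `` {w}"
    by (metis quotientE)
  have vu: "s v = t u" using gf unfolding u(2) v(2) qsrc_class[OF v(1)] qtgt_class[OF u(1)] .
  have wv: "s w = t v" using hg unfolding v(2) w(2) qsrc_class[OF w(1)] qtgt_class[OF v(1)] .
  show "qcomp h (qcomp g f) = qcomp (qcomp h g) f"
    unfolding u(2) v(2) w(2) using quotient_assoc[OF w(1) v(1) u(1) wv vu] .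
qed

end

lemma all_less_2: "(\<forall>k < Suc (Suc 0). Q k) \<longleftrightarrow> Q 0 \<and> Q 1"
  by (auto simp: less_Suc_eq)

lemma all_less_3: "(\<forall>k < Suc (Suc (Suc 0)). Q k) \<longleftrightarrow> Q 0 \<and> Q 1 \<and> Q 2"
  by (auto simp: less_Suc_eq numeral_2_eq_2)

locale globular_ext =
  fixes C :: "('o, 'm) gext"
  assumes globular: "globular_extension C"
begin

lemma category: "is_category C"
  using globular by (simp add: globular_extension_def)

lemma hom_comp: "f \<in> hom C a b \<Longrightarrow> g \<in> hom C b d \<Longrightarrow> Cmp C g f \<in> hom C a d"
  using category unfolding is_category_def hom_def by auto

lemma cmp_assoc: "f \<in> hom C a b \<Longrightarrow> g \<in> hom C b d \<Longrightarrow> h \<in> hom C d e \<Longrightarrow>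
    Cmp C h (Cmp C g f) = Cmp C (Cmp C h g) f"
  using category unfolding is_category_def hom_def by auto

lemma cmp_id_right: "f \<in> hom C a b \<Longrightarrow> Cmp C f (Idm C a) = f"
  using category unfolding is_category_def hom_def by auto

lemma cmp_id_left: "f \<in> hom C a b \<Longrightarrow> Cmp C (Idm C b) f = f"
  using category unfolding is_category_def hom_def by auto

lemma id_hom: "a \<in> Ob C \<Longrightarrow> Idm C a \<in> hom C a a"
  using category unfolding is_category_def hom_def by auto

lemma under_globe: "under_globe C"
  using globular by (simp add: globular_extension_def)

lemma globe_ob: "Dg C k \<in> Ob C"
  using under_globe unfolding under_globe_def by auto

lemma sg_hom: "sg C (Suc k) \<in> hom C (Dg C k) (Dg C (Suc k))"
  and tu_hom: "tu C (Suc k) \<in> hom C (Dg C k) (Dg C (Suc k))"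
  using under_globe unfolding under_globe_def by (metis diff_Suc_1 le_add1 plus_1_eq_Suc)+

text \<open>The globular relations, indexed so that no subtraction occurs.\<close>

lemma globular_rel_sg: "Cmp C (sg C (Suc (Suc k))) (sg C (Suc k)) = Cmp C (tu C (Suc (Suc k))) (sg C (Suc k))"
  and globular_rel_tu: "Cmp C (sg C (Suc (Suc k))) (tu C (Suc k)) = Cmp C (tu C (Suc (Suc k))) (tu C (Suc k))"
  using under_globe unfolding under_globe_def by (metis Suc_eq_plus1 le_add2)+

lemma sgit_refl: "sgit C i i = Idm C (Dg C i)"
  and tuit_refl: "tuit C i i = Idm C (Dg C i)"
  by (cases i; simp)+

lemma sgit_Suc: "sgit C (Suc i) i = sg C (Suc i)"
  and tuit_Suc: "tuit C (Suc i) i = tu C (Suc i)"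
  by (simp_all add: sgit_refl tuit_refl cmp_id_right[OF sg_hom] cmp_id_right[OF tu_hom])

lemma sgit_Suc_Suc: "sgit C (Suc (Suc i)) i = Cmp C (sg C (Suc (Suc i))) (sg C (Suc i))"
  and tuit_Suc_Suc: "tuit C (Suc (Suc i)) i = Cmp C (tu C (Suc (Suc i))) (tu C (Suc i))"
  by (simp_all add: sgit_refl tuit_refl cmp_id_right[OF sg_hom] cmp_id_right[OF tu_hom])

lemma sum_colimit: "table T \<Longrightarrow> is_colimit C T (gs C T) (gi C T)"
  using globular by (cases T) (simp add: globular_extension_def)

lemma table_bin: "j < i \<Longrightarrow> table (bin i j)"
  by (simp add: table_def)

lemma bin_cocone_iff: "cocone C (bin i j) X c \<longleftrightarrow>
    c 0 \<in> hom C (Dg C i) X \<and> c 1 \<in> hom C (Dg C i) X \<and>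
    Cmp C (c 0) (sgit C i j) = Cmp C (c 1) (tuit C i j)"
  unfolding cocone_def Let_def fst_conv snd_conv by (simp add: all_less_2)

lemma bin_inclusions:
  assumes "j < i"
  shows "gs C (bin i j) \<in> Ob C"
    and "gi C (bin i j) 0 \<in> hom C (Dg C i) (gs C (bin i j))"
    and "gi C (bin i j) 1 \<in> hom C (Dg C i) (gs C (bin i j))"
    and "Cmp C (gi C (bin i j) 0) (sgit C i j) = Cmp C (gi C (bin i j) 1) (tuit C i j)"
  proof -
  have "gs C (bin i j) \<in> Ob C \<and> cocone C (bin i j) (gs C (bin i j)) (gi C (bin i j))"
    using sum_colimit[OF table_bin[OF assms]] unfolding is_colimit_def by blast
  then show "gs C (bin i j) \<in> Ob C"
    and "gi C (bin i j) 0 \<in> hom C (Dg C i) (gs C (bin i j))"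
    and "gi C (bin i j) 1 \<in> hom C (Dg C i) (gs C (bin i j))"
    and "Cmp C (gi C (bin i j) 0) (sgit C i j) = Cmp C (gi C (bin i j) 1) (tuit C i j)"
    unfolding bin_cocone_iff by blast+
qed

lemma bin_univ:
  assumes "j < i" "X \<in> Ob C" "a \<in> hom C (Dg C i) X" "b \<in> hom C (Dg C i) X"
    "Cmp C a (sgit C i j) = Cmp C b (tuit C i j)"
  shows "\<exists>!m. m \<in> hom C (gs C (bin i j)) X \<and>
           Cmp C m (gi C (bin i j) 0) = a \<and> Cmp C m (gi C (bin i j) 1) = b"
proof -
  let ?c = "\<lambda>k::nat. if k = 0 then a else b"
  have "cocone C (bin i j) X ?c" using assms(3-5) unfolding bin_cocone_iff by simp
  then have "\<exists>!m. m \<in> hom C (gs C (bin i j)) X \<and>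
      (\<forall>k < length (fst (bin i j)). Cmp C m (gi C (bin i j) k) = ?c k)"
    using sum_colimit[OF table_bin[OF assms(1)]] assms(2) unfolding is_colimit_def by blast
  moreover have "(\<forall>k < length (fst (bin i j)). Cmp C m (gi C (bin i j) k) = ?c k) \<longleftrightarrow>
      Cmp C m (gi C (bin i j) 0) = a \<and> Cmp C m (gi C (bin i j) 1) = b" for m
    by (auto simp: less_Suc_eq)
  ultimately show ?thesis by (simp only: conj_assoc)
qed

text \<open>The map \<open>M_(k+2) \<amalg> M_(k+2)\<close> between binary globular sums glued along \<open>D_k\<close>, for
\<open>M\<close> = \<open>\<sigma>\<close> or \<open>\<tau>\<close>; the hypotheses are exactly what makes it well defined.\<close>

lemma amalg_map_char:
  fixes k :: nat
  assumes M: "M (Suc (Suc k)) \<in> hom C (Dg C (Suc k)) (Dg C (Suc (Suc k)))"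
    "Cmp C (M (Suc (Suc k))) (sg C (Suc k)) = Cmp C (sg C (Suc (Suc k))) (sg C (Suc k))"
    "Cmp C (M (Suc (Suc k))) (tu C (Suc k)) = Cmp C (tu C (Suc (Suc k))) (tu C (Suc k))"
  defines "L \<equiv> bin (Suc k) k" and "H \<equiv> bin (Suc (Suc k)) k"
  shows "amalg_map C M (Suc (Suc k)) k \<in> hom C (gs C L) (gs C H)"
    and "Cmp C (amalg_map C M (Suc (Suc k)) k) (gi C L 0) = Cmp C (gi C H 0) (M (Suc (Suc k)))"
    and "Cmp C (amalg_map C M (Suc (Suc k)) k) (gi C L 1) = Cmp C (gi C H 1) (M (Suc (Suc k)))"
proof -
  have kk: "k < Suc (Suc k)" by simp
  note incl = bin_inclusions[OF kk, folded H_def]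
  let ?a = "Cmp C (gi C H 0) (M (Suc (Suc k)))" and ?b = "Cmp C (gi C H 1) (M (Suc (Suc k)))"
  have "Cmp C ?a (sg C (Suc k)) = Cmp C (gi C H 0) (sgit C (Suc (Suc k)) k)"
    unfolding sgit_Suc_Suc M(2)[symmetric] using cmp_assoc[OF sg_hom M(1) incl(2)] by (rule sym)
  also have "\<dots> = Cmp C (gi C H 1) (tuit C (Suc (Suc k)) k)" using incl(4) .
  also have "\<dots> = Cmp C ?b (tu C (Suc k))"
    unfolding tuit_Suc_Suc M(3)[symmetric] using cmp_assoc[OF tu_hom M(1) incl(3)] .
  finally have "Cmp C ?a (sgit C (Suc k) k) = Cmp C ?b (tuit C (Suc k) k)"
    unfolding sgit_Suc tuit_Suc .
  from bin_univ[OF lessI incl(1) hom_comp[OF M(1) incl(2)] hom_comp[OF M(1) incl(3)] this]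
  have "\<exists>!h. h \<in> hom C (gs C L) (gs C H) \<and> Cmp C h (gi C L 0) = ?a \<and> Cmp C h (gi C L 1) = ?b"
    by (simp add: L_def)
  from theI'[OF this]
  show "amalg_map C M (Suc (Suc k)) k \<in> hom C (gs C L) (gs C H)"
    and "Cmp C (amalg_map C M (Suc (Suc k)) k) (gi C L 0) = ?a"
    and "Cmp C (amalg_map C M (Suc (Suc k)) k) (gi C L 1) = ?b"
    unfolding amalg_map_def L_def H_def by simp_all
qed

text \<open>The one-term globular sum on \<open>D_i\<close> retracts onto \<open>D_i\<close>; this lets contractibility be
applied to pairs of endomorphisms of \<open>D_i\<close>.\<close>

lemma singleton_sum:
  fixes i :: nat
  defines "T \<equiv> ([i], [] :: nat list)"
  shows "table T" and "table_dim T = i"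
    and "gi C T 0 \<in> hom C (Dg C i) (gs C T)"
    and "\<exists>r \<in> hom C (gs C T) (Dg C i). Cmp C r (gi C T 0) = Idm C (Dg C i)"
proof -
  show tab: "table T" and "table_dim T = i" unfolding T_def table_def table_dim_def by simp_all
  have cocone_iff: "cocone C T X c \<longleftrightarrow> c 0 \<in> hom C (Dg C i) X" for X c
    unfolding T_def cocone_def Let_def by simp
  note colim = sum_colimit[OF tab, unfolded is_colimit_def cocone_iff]
  then show "gi C T 0 \<in> hom C (Dg C i) (gs C T)" by (rule conjunct1[OF conjunct2])
  have "\<exists>!r. r \<in> hom C (gs C T) (Dg C i) \<and>
      (\<forall>k < length (fst T). Cmp C r (gi C T k) = Idm C (Dg C i))"
    using colim[THEN conjunct2, THEN conjunct2, rule_format, OF globe_ob id_hom[OF globe_ob]] .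
  then obtain r where "r \<in> hom C (gs C T) (Dg C i)"
    and "\<forall>k < length (fst T). Cmp C r (gi C T k) = Idm C (Dg C i)"
    by blast
  moreover have "0 < length (fst T)" unfolding T_def by simp
  ultimately show "\<exists>r \<in> hom C (gs C T) (Dg C i). Cmp C r (gi C T 0) = Idm C (Dg C i)"
    by blast
qed

lemma ternary_sum:
  fixes k :: nat
  defines "T \<equiv> ([Suc k, Suc k, Suc k], [k, k])"
  shows "table T" and "table_dim T = Suc k" and "gs C T \<in> Ob C"
    and "gi C T 0 \<in> hom C (Dg C (Suc k)) (gs C T)"
    and "gi C T 1 \<in> hom C (Dg C (Suc k)) (gs C T)"
    and "gi C T 2 \<in> hom C (Dg C (Suc k)) (gs C T)"
    and "Cmp C (gi C T 0) (sg C (Suc k)) = Cmp C (gi C T 1) (tu C (Suc k))"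
    and "Cmp C (gi C T 1) (sg C (Suc k)) = Cmp C (gi C T 2) (tu C (Suc k))"
proof -
  show tab: "table T" unfolding T_def table_def by (simp add: less_Suc_eq)
  show "table_dim T = Suc k" unfolding T_def table_dim_def by (simp add: insert_commute)
  have "gs C T \<in> Ob C \<and> cocone C T (gs C T) (gi C T)"
    using sum_colimit[OF tab] unfolding is_colimit_def by blast
  then show "gs C T \<in> Ob C"
    and "gi C T 0 \<in> hom C (Dg C (Suc k)) (gs C T)"
    and "gi C T 1 \<in> hom C (Dg C (Suc k)) (gs C T)"
    and "gi C T 2 \<in> hom C (Dg C (Suc k)) (gs C T)"
    and "Cmp C (gi C T 0) (sg C (Suc k)) = Cmp C (gi C T 1) (tu C (Suc k))"
    and "Cmp C (gi C T 1) (sg C (Suc k)) = Cmp C (gi C T 2) (tu C (Suc k))"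
    unfolding T_def cocone_def Let_def fst_conv snd_conv
    by (simp_all only: length_Cons list.size all_less_3 all_less_2 nth_Cons_0 nth_Cons_Suc numeral_2_eq_2
        One_nat_def add_Suc_right add_0_right sgit_Suc tuit_Suc)
qed

lemma glob_parallel_comp:
  assumes "glob_parallel C i f g" "f \<in> hom C (Dg C i) X" "g \<in> hom C (Dg C i) X" "h \<in> hom C X Y"
  shows "glob_parallel C i (Cmp C h f) (Cmp C h g)"
proof (cases i)
  case (Suc j)
  have f: "f \<in> hom C (Dg C (Suc j)) X" and g: "g \<in> hom C (Dg C (Suc j)) X"
    using assms(2,3) Suc by simp_all
  have "Cmp C f (sg C (Suc j)) = Cmp C g (sg C (Suc j))" "Cmp C f (tu C (Suc j)) = Cmp C g (tu C (Suc j))"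
    using assms(1) Suc by (simp_all add: glob_parallel_def)
  then show ?thesis
    unfolding glob_parallel_def Suc
    using cmp_assoc[OF sg_hom f assms(4)] cmp_assoc[OF sg_hom g assms(4)]
      cmp_assoc[OF tu_hom f assms(4)] cmp_assoc[OF tu_hom g assms(4)] by simp
qed (simp add: glob_parallel_def)

end

locale infty_grpd = globular_ext C for C :: "('o, 'm) gext" +
  fixes Gob :: "'o \<Rightarrow> 'x set" and Gar :: "'m \<Rightarrow> 'x \<Rightarrow> 'x"
  assumes infty: "infty_groupoid C Gob Gar"
begin

lemma presheaf: "presheaf C Gob Gar"
  using infty by (simp add: infty_groupoid_def)

lemma Gar_in: "f \<in> hom C a b \<Longrightarrow> x \<in> Gob b \<Longrightarrow> Gar f x \<in> Gob a"
  using presheaf unfolding presheaf_def hom_def by auto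

lemma Gar_cmp: "f \<in> hom C a b \<Longrightarrow> g \<in> hom C b d \<Longrightarrow> x \<in> Gob d \<Longrightarrow>
    Gar (Cmp C g f) x = Gar f (Gar g x)"
  using presheaf unfolding presheaf_def hom_def by (metis (mono_tags, lifting) mem_Collect_eq)

lemma Gar_id: "a \<in> Ob C \<Longrightarrow> x \<in> Gob a \<Longrightarrow> Gar (Idm C a) x = x"
  using presheaf unfolding presheaf_def by blast

lemma segal: "table T \<Longrightarrow> bij_betw (\<lambda>x. map (\<lambda>k. Gar (gi C T k) x) [0..<length (fst T)])
    (Gob (gs C T)) (fiber_prod C Gob Gar T)"
  using infty unfolding infty_groupoid_def by blast

lemma sum_elem_unique:
  assumes "table T" "\<xi> \<in> Gob (gs C T)" "\<xi>' \<in> Gob (gs C T)"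
    "\<And>k. k < length (fst T) \<Longrightarrow> Gar (gi C T k) \<xi> = Gar (gi C T k) \<xi>'"
  shows "\<xi> = \<xi>'"
proof (rule inj_onD[OF bij_betw_imp_inj_on[OF segal[OF assms(1)]] _ assms(2,3)])
  show "map (\<lambda>k. Gar (gi C T k) \<xi>) [0..<length (fst T)] =
      map (\<lambda>k. Gar (gi C T k) \<xi>') [0..<length (fst T)]"
    using assms(4) by (intro map_cong) auto
qed

lemma sum_elem_exists:
  assumes "table T" "us \<in> fiber_prod C Gob Gar T"
  shows "\<exists>\<xi> \<in> Gob (gs C T). \<forall>k < length (fst T). Gar (gi C T k) \<xi> = us ! k"
proof -
  obtain \<xi> where \<xi>: "\<xi> \<in> Gob (gs C T)"
    and us: "us = map (\<lambda>k. Gar (gi C T k) \<xi>) [0..<length (fst T)]"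
    using assms(2) unfolding bij_betw_imp_surj_on[OF segal[OF assms(1)], symmetric] by (rule imageE)
  show ?thesis
  proof (rule bexI[OF _ \<xi>], intro allI impI)
    fix k assume "k < length (fst T)"
    then show "Gar (gi C T k) \<xi> = us ! k" unfolding us by simp
  qed
qed

definition glue :: "nat \<Rightarrow> nat \<Rightarrow> 'x \<Rightarrow> 'x \<Rightarrow> 'x" where
  "glue i j v u = (THE \<xi>. \<xi> \<in> Gob (gs C (bin i j)) \<and>
      Gar (gi C (bin i j) 0) \<xi> = v \<and> Gar (gi C (bin i j) 1) \<xi> = u)"

lemma glue_unique:
  assumes "j < i" "\<xi> \<in> Gob (gs C (bin i j))"
    "Gar (gi C (bin i j) 0) \<xi> = v" "Gar (gi C (bin i j) 1) \<xi> = u"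
  shows "glue i j v u = \<xi>"
  unfolding glue_def
proof (rule the_equality)
  show "\<xi> \<in> Gob (gs C (bin i j)) \<and> Gar (gi C (bin i j) 0) \<xi> = v \<and> Gar (gi C (bin i j) 1) \<xi> = u"
    using assms(2-4) by blast
next
  fix \<xi>' assume \<xi>': "\<xi>' \<in> Gob (gs C (bin i j)) \<and>
      Gar (gi C (bin i j) 0) \<xi>' = v \<and> Gar (gi C (bin i j) 1) \<xi>' = u"
  show "\<xi>' = \<xi>"
  proof (rule sum_elem_unique[OF table_bin[OF assms(1)]])
    show "\<xi>' \<in> Gob (gs C (bin i j))" "\<xi> \<in> Gob (gs C (bin i j))" using \<xi>' assms(2) by blast+
    fix k assume "k < length (fst (bin i j))"
    then have "k = 0 \<or> k = 1" by auto
    then show "Gar (gi C (bin i j) k) \<xi>' = Gar (gi C (bin i j) k) \<xi>" using \<xi>' assms(3,4) by auto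
  qed
qed

lemma glue_props:
  assumes "j < i" "v \<in> Gob (Dg C i)" "u \<in> Gob (Dg C i)" "Gar (sgit C i j) v = Gar (tuit C i j) u"
  shows "glue i j v u \<in> Gob (gs C (bin i j))"
    and "Gar (gi C (bin i j) 0) (glue i j v u) = v"
    and "Gar (gi C (bin i j) 1) (glue i j v u) = u"
proof -
  have "[v, u] \<in> fiber_prod C Gob Gar (bin i j)"
    using assms(2-4) unfolding fiber_prod_def Let_def by (simp add: all_less_2)
  then obtain \<xi> where \<xi>: "\<xi> \<in> Gob (gs C (bin i j))"
    and "\<forall>k < length (fst (bin i j)). Gar (gi C (bin i j) k) \<xi> = [v, u] ! k"
    using sum_elem_exists[OF table_bin[OF assms(1)]] by blast
  then have \<xi>0: "Gar (gi C (bin i j) 0) \<xi> = v" and \<xi>1: "Gar (gi C (bin i j) 1) \<xi> = u"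
    by (simp_all add: all_less_2)
  show "glue i j v u \<in> Gob (gs C (bin i j))"
    and "Gar (gi C (bin i j) 0) (glue i j v u) = v"
    and "Gar (gi C (bin i j) 1) (glue i j v u) = u"
    unfolding glue_unique[OF assms(1) \<xi> \<xi>0 \<xi>1] using \<xi> \<xi>0 \<xi>1 by simp_all
qed

lemma Gar_bin_map:
  assumes "j < i" "m \<in> hom C (gs C (bin i j)) X" "y \<in> Gob X"
  shows "Gar m y = glue i j (Gar (Cmp C m (gi C (bin i j) 0)) y) (Gar (Cmp C m (gi C (bin i j) 1)) y)"
proof (rule glue_unique[symmetric, OF assms(1)])
  note incl = bin_inclusions[OF assms(1)]
  show "Gar m y \<in> Gob (gs C (bin i j))" using Gar_in[OF assms(2,3)] .
  show "Gar (gi C (bin i j) 0) (Gar m y) = Gar (Cmp C m (gi C (bin i j) 0)) y"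
    using Gar_cmp[OF incl(2) assms(2,3)] by (rule sym)
  show "Gar (gi C (bin i j) 1) (Gar m y) = Gar (Cmp C m (gi C (bin i j) 1)) y"
    using Gar_cmp[OF incl(3) assms(2,3)] by (rule sym)
qed

lemma ternary_elem:
  fixes k :: nat
  defines "T \<equiv> ([Suc k, Suc k, Suc k], [k, k])"
  assumes "w \<in> Gob (Dg C (Suc k))" "v \<in> Gob (Dg C (Suc k))" "u \<in> Gob (Dg C (Suc k))"
    "Gar (sg C (Suc k)) w = Gar (tu C (Suc k)) v" "Gar (sg C (Suc k)) v = Gar (tu C (Suc k)) u"
  obtains z where "z \<in> Gob (gs C T)" and "Gar (gi C T 0) z = w"
    and "Gar (gi C T 1) z = v" and "Gar (gi C T 2) z = u"
proof -
  have "[w, v, u] \<in> fiber_prod C Gob Gar T"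
    using assms(2-6) unfolding T_def fiber_prod_def Let_def fst_conv snd_conv
    by (simp only: mem_Collect_eq length_Cons list.size all_less_3 all_less_2 nth_Cons_0 nth_Cons_Suc
        numeral_2_eq_2 One_nat_def add_Suc_right add_0_right sgit_Suc tuit_Suc simp_thms)
  then obtain z where "z \<in> Gob (gs C T)" "\<forall>j < length (fst T). Gar (gi C T j) z = [w, v, u] ! j"
    using sum_elem_exists[OF ternary_sum(1)[of k, folded T_def]] by blast
  moreover have "length (fst T) = Suc (Suc (Suc 0))" unfolding T_def by simp
  ultimately show ?thesis
    using that by (simp add: all_less_3 numeral_2_eq_2)
qed

end

locale pregroupoidal_grpd = infty_grpd C Gob Gar
  for C :: "('o, 'm) gext" and Gob :: "'o \<Rightarrow> 'x set" and Gar :: "'m \<Rightarrow> 'x \<Rightarrow> 'x" +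
  fixes P :: "'m pregrp"
  assumes pregroupoidal: "pregroupoidal C P"
begin

abbreviation sim :: "nat \<Rightarrow> ('x \<times> 'x) set" where
  "sim i \<equiv> sim_rel C Gob Gar i"

abbreviation vcomp :: "nat \<Rightarrow> 'x \<Rightarrow> 'x \<Rightarrow> 'x" where
  "vcomp i v u \<equiv> gcomp C P Gob Gar (Suc i) i v u"

lemma nab_hom: "j < i \<Longrightarrow> nab P i j \<in> hom C (Dg C i) (gs C (bin i j))"
  and ww_hom: "j < i \<Longrightarrow> ww P i j \<in> hom C (Dg C i) (Dg C i)"
  using pregroupoidal unfolding pregroupoidal_def by blast+

lemma kap_hom: "kap P i \<in> hom C (Dg C (Suc i)) (Dg C i)"
  using pregroupoidal unfolding pregroupoidal_def by simp

lemma nab_sg: "Cmp C (nab P (Suc i) i) (sg C (Suc i)) = Cmp C (gi C (bin (Suc i) i) 1) (sg C (Suc i))"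
  and nab_tu: "Cmp C (nab P (Suc i) i) (tu C (Suc i)) = Cmp C (gi C (bin (Suc i) i) 0) (tu C (Suc i))"
  using pregroupoidal unfolding pregroupoidal_def by (metis diff_Suc_1 le_add1 plus_1_eq_Suc)+

lemma nab_sg_lower:
    "Cmp C (nab P (Suc (Suc k)) k) (sg C (Suc (Suc k))) = Cmp C (amalg_map C (sg C) (Suc (Suc k)) k) (nab P (Suc k) k)"
  and nab_tu_lower:
    "Cmp C (nab P (Suc (Suc k)) k) (tu C (Suc (Suc k))) = Cmp C (amalg_map C (tu C) (Suc (Suc k)) k) (nab P (Suc k) k)"
  using pregroupoidal unfolding pregroupoidal_def by (metis Suc_eq_plus1 diff_Suc_1 lessI)+

lemma kap_sg: "Cmp C (kap P i) (sg C (Suc i)) = Idm C (Dg C i)"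
  and kap_tu: "Cmp C (kap P i) (tu C (Suc i)) = Idm C (Dg C i)"
  using pregroupoidal unfolding pregroupoidal_def by simp_all

lemma ww_sg: "Cmp C (ww P (Suc i) i) (sg C (Suc i)) = tu C (Suc i)"
  and ww_tu: "Cmp C (ww P (Suc i) i) (tu C (Suc i)) = sg C (Suc i)"
  using pregroupoidal unfolding pregroupoidal_def by (metis diff_Suc_1 le_add1 plus_1_eq_Suc)+

lemma vcomp_glue: "vcomp i v u = Gar (nab P (Suc i) i) (glue (Suc i) i v u)"
  by (simp add: gcomp_def glue_def)

lemma vcomp_props:
  assumes v: "v \<in> Gob (Dg C (Suc i))" and u: "u \<in> Gob (Dg C (Suc i))"
    and vu: "Gar (sg C (Suc i)) v = Gar (tu C (Suc i)) u"
  shows "vcomp i v u \<in> Gob (Dg C (Suc i))"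
    and "Gar (sg C (Suc i)) (vcomp i v u) = Gar (sg C (Suc i)) u"
    and "Gar (tu C (Suc i)) (vcomp i v u) = Gar (tu C (Suc i)) v"
proof -
  have ii: "i < Suc i" by simp
  note glue = glue_props[OF ii v u vu[folded sgit_Suc tuit_Suc]]
  note incl = bin_inclusions[OF ii]
  note nab = nab_hom[OF ii]
  show "vcomp i v u \<in> Gob (Dg C (Suc i))" unfolding vcomp_glue using Gar_in[OF nab glue(1)] .
  have "Gar (sg C (Suc i)) (vcomp i v u) = Gar (Cmp C (nab P (Suc i) i) (sg C (Suc i))) (glue (Suc i) i v u)"
    unfolding vcomp_glue using Gar_cmp[OF sg_hom nab glue(1)] by (rule sym)
  also have "\<dots> = Gar (sg C (Suc i)) u"
    unfolding nab_sg Gar_cmp[OF sg_hom incl(3) glue(1)] glue(3) ..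
  finally show "Gar (sg C (Suc i)) (vcomp i v u) = Gar (sg C (Suc i)) u" .
  have "Gar (tu C (Suc i)) (vcomp i v u) = Gar (Cmp C (nab P (Suc i) i) (tu C (Suc i))) (glue (Suc i) i v u)"
    unfolding vcomp_glue using Gar_cmp[OF tu_hom nab glue(1)] by (rule sym)
  also have "\<dots> = Gar (tu C (Suc i)) v"
    unfolding nab_tu Gar_cmp[OF tu_hom incl(2) glue(1)] glue(2) ..
  finally show "Gar (tu C (Suc i)) (vcomp i v u) = Gar (tu C (Suc i)) v" .
qed

lemma vcomp_natural:
  assumes "m \<in> hom C (gs C (bin (Suc i) i)) X" "y \<in> Gob X"
  shows "vcomp i (Gar (Cmp C m (gi C (bin (Suc i) i) 0)) y) (Gar (Cmp C m (gi C (bin (Suc i) i) 1)) y)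
       = Gar (Cmp C m (nab P (Suc i) i)) y"
  unfolding vcomp_glue Gar_bin_map[OF lessI assms, symmetric] Gar_cmp[OF nab_hom[OF lessI] assms] ..

lemma sim_iff: "(u, v) \<in> sim i \<longleftrightarrow> u \<in> Gob (Dg C i) \<and> v \<in> Gob (Dg C i) \<and>
    (\<exists>a \<in> Gob (Dg C (Suc i)). Gar (sg C (Suc i)) a = u \<and> Gar (tu C (Suc i)) a = v)"
  unfolding sim_rel_def by simp

text \<open>\<open>\<sim>\<close> is an equivalence relation: reflexivity by the units \<open>\<kappa>\<close>, symmetry by the
reversals \<open>w\<close>, transitivity by composition one dimension up.\<close>

lemma sim_refl: "u \<in> Gob (Dg C i) \<Longrightarrow> (u, u) \<in> sim i"
  unfolding sim_iff
proof (intro conjI bexI)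
  assume u: "u \<in> Gob (Dg C i)"
  show "Gar (kap P i) u \<in> Gob (Dg C (Suc i))" using Gar_in[OF kap_hom u] .
  show "Gar (sg C (Suc i)) (Gar (kap P i) u) = u"
    using Gar_cmp[OF sg_hom kap_hom u] Gar_id[OF globe_ob u] by (simp add: kap_sg)
  show "Gar (tu C (Suc i)) (Gar (kap P i) u) = u"
    using Gar_cmp[OF tu_hom kap_hom u] Gar_id[OF globe_ob u] by (simp add: kap_tu)
qed

lemma sim_sym: "(u, v) \<in> sim i \<Longrightarrow> (v, u) \<in> sim i"
  unfolding sim_iff
proof (elim conjE bexE, intro conjI bexI)
  fix a assume a: "a \<in> Gob (Dg C (Suc i))" "Gar (sg C (Suc i)) a = u" "Gar (tu C (Suc i)) a = v"
  note w = ww_hom[OF lessI]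
  show "Gar (ww P (Suc i) i) a \<in> Gob (Dg C (Suc i))" using Gar_in[OF w a(1)] .
  show "Gar (sg C (Suc i)) (Gar (ww P (Suc i) i) a) = v"
    using Gar_cmp[OF sg_hom w a(1)] a(3) by (simp add: ww_sg)
  show "Gar (tu C (Suc i)) (Gar (ww P (Suc i) i) a) = u"
    using Gar_cmp[OF tu_hom w a(1)] a(2) by (simp add: ww_tu)
qed

lemma sim_trans: "(u, v) \<in> sim i \<Longrightarrow> (v, w) \<in> sim i \<Longrightarrow> (u, w) \<in> sim i"
  unfolding sim_iff
proof (elim conjE bexE, intro conjI)
  fix a b assume a: "a \<in> Gob (Dg C (Suc i))" "Gar (sg C (Suc i)) a = u" "Gar (tu C (Suc i)) a = v"
    and b: "b \<in> Gob (Dg C (Suc i))" "Gar (sg C (Suc i)) b = v" "Gar (tu C (Suc i)) b = w"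
  have ba: "Gar (sg C (Suc i)) b = Gar (tu C (Suc i)) a" using a(3) b(2) by simp
  note c = vcomp_props[OF b(1) a(1) ba]
  show "\<exists>e \<in> Gob (Dg C (Suc i)). Gar (sg C (Suc i)) e = u \<and> Gar (tu C (Suc i)) e = w"
    using c a(2) b(3) by blast
qed

lemma sim_equiv: "equiv (Gob (Dg C i)) (sim i)"
proof (rule equivI)
  show "sim i \<subseteq> Gob (Dg C i) \<times> Gob (Dg C i)" using sim_iff by auto
  show "refl_on (Gob (Dg C i)) (sim i)" using sim_refl sim_iff by (auto simp: refl_on_def)
  show "sym (sim i)" using sim_sym by (auto intro: symI)
  show "trans (sim i)" using sim_trans by (auto intro: transI)
qed

text \<open>\<open>\<sim>\<close>-related cells are parallel (by the globular relations).\<close>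

lemma sim_sg: "(u, v) \<in> sim (Suc k) \<Longrightarrow> Gar (sg C (Suc k)) u = Gar (sg C (Suc k)) v"
  and sim_tu: "(u, v) \<in> sim (Suc k) \<Longrightarrow> Gar (tu C (Suc k)) u = Gar (tu C (Suc k)) v"
  unfolding sim_iff
  by (auto simp: Gar_cmp[OF sg_hom sg_hom, symmetric] Gar_cmp[OF sg_hom tu_hom, symmetric]
      Gar_cmp[OF tu_hom sg_hom, symmetric] Gar_cmp[OF tu_hom tu_hom, symmetric]
      globular_rel_sg globular_rel_tu)

text \<open>The \<open>(k+1)\<close>-source (target) of a composite \<open>b \<ast>^(k+2)_k a\<close> is the composite of the
sources (targets) of \<open>b\<close> and \<open>a\<close>; stated for \<open>M = \<sigma>\<close> and \<open>M = \<tau>\<close> at once, using the axiom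
relating \<open>\<nabla>^(k+2)_k\<close> to \<open>\<nabla>^(k+1)_k\<close> through \<open>M \<amalg> M\<close>.\<close>

lemma comp_boundary:
  fixes M :: "nat \<Rightarrow> 'm" and k :: nat
  defines "N \<equiv> M (Suc (Suc k))"
  assumes M: "N \<in> hom C (Dg C (Suc k)) (Dg C (Suc (Suc k)))"
    "Cmp C N (sg C (Suc k)) = Cmp C (sg C (Suc (Suc k))) (sg C (Suc k))"
    "Cmp C N (tu C (Suc k)) = Cmp C (tu C (Suc (Suc k))) (tu C (Suc k))"
    and nab_M: "Cmp C (nab P (Suc (Suc k)) k) N = Cmp C (amalg_map C M (Suc (Suc k)) k) (nab P (Suc k) k)"
    and b: "b \<in> Gob (Dg C (Suc (Suc k)))" and a: "a \<in> Gob (Dg C (Suc (Suc k)))"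
    and ba: "Gar (sgit C (Suc (Suc k)) k) b = Gar (tuit C (Suc (Suc k)) k) a"
  shows "Gar N (gcomp C P Gob Gar (Suc (Suc k)) k b a) = vcomp k (Gar N b) (Gar N a)"
proof -
  have kk: "k < Suc (Suc k)" by simp
  let ?\<xi> = "glue (Suc (Suc k)) k b a" and ?A = "amalg_map C M (Suc (Suc k)) k"
  note glue = glue_props[OF kk b a ba]
  note incl = bin_inclusions[OF kk]
  note A = amalg_map_char[of M k, folded N_def, OF M]
  have "Gar N (gcomp C P Gob Gar (Suc (Suc k)) k b a) = Gar (Cmp C (nab P (Suc (Suc k)) k) N) ?\<xi>"
    unfolding gcomp_def glue_def[symmetric] using Gar_cmp[OF M(1) nab_hom[OF kk] glue(1)] by (rule sym)
  also have "\<dots> = Gar (nab P (Suc k) k) (Gar ?A ?\<xi>)"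
    unfolding nab_M using Gar_cmp[OF nab_hom[OF lessI] A(1) glue(1)] .
  also have "Gar ?A ?\<xi> = glue (Suc k) k (Gar N b) (Gar N a)"
    using Gar_bin_map[OF lessI A(1) glue(1)]
    unfolding A(2,3) Gar_cmp[OF M(1) incl(2) glue(1)] Gar_cmp[OF M(1) incl(3) glue(1)] glue(2,3) .
  finally show ?thesis unfolding vcomp_glue .
qed

lemma sgit_tuit_Suc_Suc:
  assumes "b \<in> Gob (Dg C (Suc (Suc k)))" "a \<in> Gob (Dg C (Suc (Suc k)))"
  shows "Gar (sgit C (Suc (Suc k)) k) b = Gar (sg C (Suc k)) (Gar (sg C (Suc (Suc k))) b)"
    and "Gar (tuit C (Suc (Suc k)) k) a = Gar (tu C (Suc k)) (Gar (tu C (Suc (Suc k))) a)"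
  unfolding sgit_Suc_Suc tuit_Suc_Suc using Gar_cmp[OF sg_hom sg_hom assms(1)] Gar_cmp[OF tu_hom tu_hom assms(2)]
  by simp_all

lemma vcomp_resp:
  assumes vv: "(v, v') \<in> sim (Suc k)" and uu: "(u, u') \<in> sim (Suc k)"
    and vu: "Gar (sg C (Suc k)) v = Gar (tu C (Suc k)) u"
  shows "(vcomp k v u, vcomp k v' u') \<in> sim (Suc k)"
proof -
  obtain b where b: "b \<in> Gob (Dg C (Suc (Suc k)))"
      "Gar (sg C (Suc (Suc k))) b = v" "Gar (tu C (Suc (Suc k))) b = v'"
    and v: "v \<in> Gob (Dg C (Suc k))" "v' \<in> Gob (Dg C (Suc k))"
    using vv unfolding sim_iff by blast
  obtain a where a: "a \<in> Gob (Dg C (Suc (Suc k)))"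
      "Gar (sg C (Suc (Suc k))) a = u" "Gar (tu C (Suc (Suc k))) a = u'"
    and u: "u \<in> Gob (Dg C (Suc k))" "u' \<in> Gob (Dg C (Suc k))"
    using uu unfolding sim_iff by blast
  have vu': "Gar (sg C (Suc k)) v' = Gar (tu C (Suc k)) u'"
    using vu sim_sg[OF vv] sim_tu[OF uu] by simp
  have ba: "Gar (sgit C (Suc (Suc k)) k) b = Gar (tuit C (Suc (Suc k)) k) a"
    unfolding sgit_tuit_Suc_Suc[OF b(1) a(1)] b(2) a(3) using vu sim_tu[OF uu] by simp
  let ?e = "gcomp C P Gob Gar (Suc (Suc k)) k b a"
  have "?e \<in> Gob (Dg C (Suc (Suc k)))"
    unfolding gcomp_def glue_def[symmetric]
    using Gar_in[OF nab_hom glue_props(1)[OF _ b(1) a(1) ba]] by simp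
  moreover have "Gar (sg C (Suc (Suc k))) ?e = vcomp k v u"
    using comp_boundary[of "sg C", OF sg_hom refl globular_rel_tu nab_sg_lower b(1) a(1) ba] b(2) a(2)
    by simp
  moreover have "Gar (tu C (Suc (Suc k))) ?e = vcomp k v' u'"
    using comp_boundary[of "tu C", OF tu_hom globular_rel_sg[symmetric] refl nab_tu_lower b(1) a(1) ba]
      b(3) a(3) by simp
  ultimately show ?thesis
    unfolding sim_iff using vcomp_props(1)[OF v(1) u(1) vu] vcomp_props(1)[OF v(2) u(2) vu'] by blast
qed

lemma nab_whisker_sg:
  "m \<in> hom C (gs C (bin (Suc i) i)) X \<Longrightarrow>
    Cmp C (Cmp C m (nab P (Suc i) i)) (sg C (Suc i)) = Cmp C (Cmp C m (gi C (bin (Suc i) i) 1)) (sg C (Suc i))"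
  using cmp_assoc[OF sg_hom nab_hom[OF lessI]] cmp_assoc[OF sg_hom bin_inclusions(3)[OF lessI]]
  by (metis nab_sg)

lemma nab_whisker_tu:
  "m \<in> hom C (gs C (bin (Suc i) i)) X \<Longrightarrow>
    Cmp C (Cmp C m (nab P (Suc i) i)) (tu C (Suc i)) = Cmp C (Cmp C m (gi C (bin (Suc i) i) 0)) (tu C (Suc i))"
  using cmp_assoc[OF tu_hom nab_hom[OF lessI]] cmp_assoc[OF tu_hom bin_inclusions(2)[OF lessI]]
  by (metis nab_tu)

text \<open>The degenerate endomorphisms \<open>\<sigma> \<circ> \<kappa>\<close> and \<open>\<tau> \<circ> \<kappa>\<close> of \<open>D_(i+1)\<close>, inducing
\<open>u \<mapsto> k(s u)\<close> and \<open>u \<mapsto> k(t u)\<close>.\<close>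

lemma kap_bdry:
  shows "Cmp C (Cmp C (sg C (Suc i)) (kap P i)) (sg C (Suc i)) = sg C (Suc i)"
    and "Cmp C (Cmp C (sg C (Suc i)) (kap P i)) (tu C (Suc i)) = sg C (Suc i)"
    and "Cmp C (Cmp C (tu C (Suc i)) (kap P i)) (sg C (Suc i)) = tu C (Suc i)"
    and "Cmp C (Cmp C (tu C (Suc i)) (kap P i)) (tu C (Suc i)) = tu C (Suc i)"
  using cmp_assoc[OF sg_hom kap_hom sg_hom] cmp_assoc[OF tu_hom kap_hom sg_hom]
    cmp_assoc[OF sg_hom kap_hom tu_hom] cmp_assoc[OF tu_hom kap_hom tu_hom]
    cmp_id_right[OF sg_hom] cmp_id_right[OF tu_hom]
  by (simp_all add: kap_sg kap_tu)

text \<open>The two bracketings of a ternary composite \<open>w \<ast> v \<ast> u\<close> are induced by two globularly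
parallel maps \<open>D_(k+1) \<rightarrow> D_(k+1) \<amalg> D_(k+1) \<amalg> D_(k+1)\<close>: \<open>M\<close> and \<open>N\<close> pick out the pairs
\<open>(w, v)\<close> and \<open>(v, u)\<close>, \<open>L\<close> and \<open>K\<close> the pairs \<open>(w \<ast> v, u)\<close> and \<open>(w, v \<ast> u)\<close>.\<close>

lemma bracketings:
  fixes k :: nat
  defines "T \<equiv> ([Suc k, Suc k, Suc k], [k, k])"
  obtains f g where "f \<in> hom C (Dg C (Suc k)) (gs C T)" "g \<in> hom C (Dg C (Suc k)) (gs C T)"
    "glob_parallel C (Suc k) f g"
    "\<And>z. z \<in> Gob (gs C T) \<Longrightarrow>
       Gar f z = vcomp k (vcomp k (Gar (gi C T 0) z) (Gar (gi C T 1) z)) (Gar (gi C T 2) z)"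
    "\<And>z. z \<in> Gob (gs C T) \<Longrightarrow>
       Gar g z = vcomp k (Gar (gi C T 0) z) (vcomp k (Gar (gi C T 1) z) (Gar (gi C T 2) z))"
proof -
  let ?B = "bin (Suc k) k" and ?nab = "nab P (Suc k) k"
  note T = ternary_sum[of k, folded T_def]
  have univ: "\<exists>m. m \<in> hom C (gs C ?B) (gs C T) \<and> Cmp C m (gi C ?B 0) = a \<and> Cmp C m (gi C ?B 1) = b"
    if "a \<in> hom C (Dg C (Suc k)) (gs C T)" "b \<in> hom C (Dg C (Suc k)) (gs C T)"
      "Cmp C a (sg C (Suc k)) = Cmp C b (tu C (Suc k))" for a b
    using bin_univ[OF lessI T(3) that(1,2)] that(3) unfolding sgit_Suc tuit_Suc by blast
  obtain M where M: "M \<in> hom C (gs C ?B) (gs C T)" "Cmp C M (gi C ?B 0) = gi C T 0" "Cmp C M (gi C ?B 1) = gi C T 1"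
    using univ[OF T(4,5,7)] by blast
  obtain N where N: "N \<in> hom C (gs C ?B) (gs C T)" "Cmp C N (gi C ?B 0) = gi C T 1" "Cmp C N (gi C ?B 1) = gi C T 2"
    using univ[OF T(5,6,8)] by blast
  note Mnab = hom_comp[OF nab_hom[OF lessI] M(1)] and Nnab = hom_comp[OF nab_hom[OF lessI] N(1)]
  obtain L where L: "L \<in> hom C (gs C ?B) (gs C T)"
      "Cmp C L (gi C ?B 0) = Cmp C M ?nab" "Cmp C L (gi C ?B 1) = gi C T 2"
    using univ[OF Mnab T(6)] nab_whisker_sg[OF M(1)] M(3) T(8) by metis
  obtain K where K: "K \<in> hom C (gs C ?B) (gs C T)"
      "Cmp C K (gi C ?B 0) = gi C T 0" "Cmp C K (gi C ?B 1) = Cmp C N ?nab"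
    using univ[OF T(4) Nnab] nab_whisker_tu[OF N(1)] N(2) T(7) by metis
  show ?thesis
  proof (rule that[OF hom_comp[OF nab_hom[OF lessI] L(1)] hom_comp[OF nab_hom[OF lessI] K(1)]])
    show "glob_parallel C (Suc k) (Cmp C L ?nab) (Cmp C K ?nab)"
      unfolding glob_parallel_def nab_whisker_sg[OF L(1)] nab_whisker_sg[OF K(1)]
        nab_whisker_tu[OF L(1)] nab_whisker_tu[OF K(1)] L(2,3) K(2,3)
        nab_whisker_sg[OF N(1)] nab_whisker_tu[OF M(1)] M(2) N(3) by simp
  next
    fix z assume z: "z \<in> Gob (gs C T)"
    show "Gar (Cmp C L ?nab) z = vcomp k (vcomp k (Gar (gi C T 0) z) (Gar (gi C T 1) z)) (Gar (gi C T 2) z)"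
      using vcomp_natural[OF L(1) z] vcomp_natural[OF M(1) z] L(2,3) M(2,3) by simp
    show "Gar (Cmp C K ?nab) z = vcomp k (Gar (gi C T 0) z) (vcomp k (Gar (gi C T 1) z) (Gar (gi C T 2) z))"
      using vcomp_natural[OF K(1) z] vcomp_natural[OF N(1) z] K(2,3) N(2,3) by simp
  qed
qed

end

locale contractible_grpd = pregroupoidal_grpd C Gob Gar P
  for C :: "('o, 'm) gext" and Gob :: "'o \<Rightarrow> 'x set" and Gar :: "'m \<Rightarrow> 'x \<Rightarrow> 'x"
    and P :: "'m pregrp" +
  assumes contractible: "contractible C"
begin

lemma parallel_lift:
  assumes "table T" "table_dim T \<le> Suc i"
    "f \<in> hom C (Dg C i) (gs C T)" "g \<in> hom C (Dg C i) (gs C T)" "glob_parallel C i f g"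
    "\<xi> \<in> Gob (gs C T)"
  shows "(Gar f \<xi>, Gar g \<xi>) \<in> sim i"
proof -
  obtain h where h: "h \<in> hom C (Dg C (Suc i)) (gs C T)"
      "Cmp C h (sg C (Suc i)) = f" "Cmp C h (tu C (Suc i)) = g"
    using contractible assms(1-5) unfolding contractible_def by fastforce
  show ?thesis
    unfolding sim_iff
  proof (intro conjI bexI)
    show "Gar f \<xi> \<in> Gob (Dg C i)" "Gar g \<xi> \<in> Gob (Dg C i)"
      using Gar_in[OF assms(3,6)] Gar_in[OF assms(4,6)] .
    show "Gar h \<xi> \<in> Gob (Dg C (Suc i))" using Gar_in[OF h(1) assms(6)] .
    show "Gar (sg C (Suc i)) (Gar h \<xi>) = Gar f \<xi>" "Gar (tu C (Suc i)) (Gar h \<xi>) = Gar g \<xi>"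
      using Gar_cmp[OF sg_hom h(1) assms(6)] Gar_cmp[OF tu_hom h(1) assms(6)] h(2,3) by simp_all
  qed
qed

text \<open>Special case: globularly parallel endomorphisms of \<open>D_i\<close> send each \<open>i\<close>-cell to
\<open>\<sim>\<close>-related cells (apply \<open>parallel_lift\<close> to the one-term globular sum on \<open>D_i\<close>).\<close>

lemma endo_lift:
  assumes a: "a \<in> hom C (Dg C i) (Dg C i)" and b: "b \<in> hom C (Dg C i) (Dg C i)"
    and ab: "glob_parallel C i a b" and u: "u \<in> Gob (Dg C i)"
  shows "(Gar a u, Gar b u) \<in> sim i"
proof -
  let ?T = "([i], [] :: nat list)"
  note T = singleton_sum[of i]
  obtain r where r: "r \<in> hom C (gs C ?T) (Dg C i)" "Cmp C r (gi C ?T 0) = Idm C (Dg C i)"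
    using T(4) by blast
  let ?z = "Gar r u"
  have z: "?z \<in> Gob (gs C ?T)" using Gar_in[OF r(1) u] .
  have z_restr: "Gar (gi C ?T 0) ?z = u"
    using Gar_cmp[OF T(3) r(1) u] r(2) Gar_id[OF globe_ob u] by simp
  have "(Gar (Cmp C (gi C ?T 0) a) ?z, Gar (Cmp C (gi C ?T 0) b) ?z) \<in> sim i"
    by (rule parallel_lift[OF T(1)]) (use T(2) hom_comp[OF a T(3)] hom_comp[OF b T(3)]
        glob_parallel_comp[OF ab a b T(3)] z in simp_all)
  then show ?thesis
    unfolding Gar_cmp[OF a T(3) z] Gar_cmp[OF b T(3) z] z_restr .
qed

text \<open>The shape of all unit and inverse laws: if \<open>a, b, c\<close> are endomorphisms of \<open>D_(k+1)\<close> such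
that \<open>a u\<close> and \<open>b u\<close> are composable and \<open>a u \<ast> b u\<close> is parallel to \<open>c u\<close> for the generic
cell \<open>u\<close>, then \<open>a u \<ast> b u \<sim> c u\<close>.\<close>

lemma comp_lift:
  assumes a: "a \<in> hom C (Dg C (Suc k)) (Dg C (Suc k))" and b: "b \<in> hom C (Dg C (Suc k)) (Dg C (Suc k))"
    and c: "c \<in> hom C (Dg C (Suc k)) (Dg C (Suc k))"
    and ab: "Cmp C a (sg C (Suc k)) = Cmp C b (tu C (Suc k))"
    and bc: "Cmp C b (sg C (Suc k)) = Cmp C c (sg C (Suc k))"
    and ac: "Cmp C a (tu C (Suc k)) = Cmp C c (tu C (Suc k))"
    and u: "u \<in> Gob (Dg C (Suc k))"
  shows "(vcomp k (Gar a u) (Gar b u), Gar c u) \<in> sim (Suc k)"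
proof -
  obtain m where m: "m \<in> hom C (gs C (bin (Suc k) k)) (Dg C (Suc k))"
    "Cmp C m (gi C (bin (Suc k) k) 0) = a" "Cmp C m (gi C (bin (Suc k) k) 1) = b"
    using bin_univ[OF lessI globe_ob a b] ab unfolding sgit_Suc tuit_Suc by blast
  have "vcomp k (Gar a u) (Gar b u) = Gar (Cmp C m (nab P (Suc k) k)) u"
    using vcomp_natural[OF m(1) u] unfolding m(2,3) .
  moreover have "(Gar (Cmp C m (nab P (Suc k) k)) u, Gar c u) \<in> sim (Suc k)"
  proof (rule endo_lift[OF hom_comp[OF nab_hom[OF lessI] m(1)] c _ u])
    show "glob_parallel C (Suc k) (Cmp C m (nab P (Suc k) k)) c"
      unfolding glob_parallel_def nab_whisker_sg[OF m(1)] nab_whisker_tu[OF m(1)] m(2,3)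
      using bc ac by simp
  qed
  ultimately show ?thesis by simp
qed

lemma unit_right:
  assumes u: "u \<in> Gob (Dg C (Suc k))"
  shows "(vcomp k u (Gar (kap P k) (Gar (sg C (Suc k)) u)), u) \<in> sim (Suc k)"
proof -
  have "(vcomp k (Gar (Idm C (Dg C (Suc k))) u) (Gar (Cmp C (sg C (Suc k)) (kap P k)) u),
      Gar (Idm C (Dg C (Suc k))) u) \<in> sim (Suc k)"
    by (rule comp_lift[OF id_hom[OF globe_ob] hom_comp[OF kap_hom sg_hom] id_hom[OF globe_ob] _ _ _ u])
      (simp_all only: cmp_id_left[OF sg_hom] cmp_id_left[OF tu_hom] kap_bdry)
  then show ?thesis unfolding Gar_id[OF globe_ob u] Gar_cmp[OF kap_hom sg_hom u] .
qed

lemma unit_left: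
  assumes u: "u \<in> Gob (Dg C (Suc k))"
  shows "(vcomp k (Gar (kap P k) (Gar (tu C (Suc k)) u)) u, u) \<in> sim (Suc k)"
proof -
  have "(vcomp k (Gar (Cmp C (tu C (Suc k)) (kap P k)) u) (Gar (Idm C (Dg C (Suc k))) u),
      Gar (Idm C (Dg C (Suc k))) u) \<in> sim (Suc k)"
    by (rule comp_lift[OF hom_comp[OF kap_hom tu_hom] id_hom[OF globe_ob] id_hom[OF globe_ob] _ _ _ u])
      (simp_all only: cmp_id_left[OF sg_hom] cmp_id_left[OF tu_hom] kap_bdry)
  then show ?thesis unfolding Gar_id[OF globe_ob u] Gar_cmp[OF kap_hom tu_hom u] .
qed

lemma inv_left:
  assumes u: "u \<in> Gob (Dg C (Suc k))"
  shows "(vcomp k (Gar (ww P (Suc k) k) u) u, Gar (kap P k) (Gar (sg C (Suc k)) u)) \<in> sim (Suc k)"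
proof -
  have "(vcomp k (Gar (ww P (Suc k) k) u) (Gar (Idm C (Dg C (Suc k))) u),
      Gar (Cmp C (sg C (Suc k)) (kap P k)) u) \<in> sim (Suc k)"
    by (rule comp_lift[OF ww_hom[OF lessI] id_hom[OF globe_ob] hom_comp[OF kap_hom sg_hom] _ _ _ u])
      (simp_all only: cmp_id_left[OF sg_hom] cmp_id_left[OF tu_hom] kap_bdry ww_sg ww_tu)
  then show ?thesis unfolding Gar_id[OF globe_ob u] Gar_cmp[OF kap_hom sg_hom u] .
qed

lemma inv_right:
  assumes u: "u \<in> Gob (Dg C (Suc k))"
  shows "(vcomp k u (Gar (ww P (Suc k) k) u), Gar (kap P k) (Gar (tu C (Suc k)) u)) \<in> sim (Suc k)"
proof -
  have "(vcomp k (Gar (Idm C (Dg C (Suc k))) u) (Gar (ww P (Suc k) k) u),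
      Gar (Cmp C (tu C (Suc k)) (kap P k)) u) \<in> sim (Suc k)"
    by (rule comp_lift[OF id_hom[OF globe_ob] ww_hom[OF lessI] hom_comp[OF kap_hom tu_hom] _ _ _ u])
      (simp_all only: cmp_id_left[OF sg_hom] cmp_id_left[OF tu_hom] kap_bdry ww_sg ww_tu)
  then show ?thesis unfolding Gar_id[OF globe_ob u] Gar_cmp[OF kap_hom tu_hom u] .
qed

text \<open>Associativity up to \<open>\<sim>\<close>: both bracketings of \<open>w \<ast> v \<ast> u\<close> are restrictions of one
element of the ternary globular sum along globularly parallel maps, so contractibility applies.\<close>

lemma vcomp_assoc:
  assumes w: "w \<in> Gob (Dg C (Suc k))" and v: "v \<in> Gob (Dg C (Suc k))" and u: "u \<in> Gob (Dg C (Suc k))"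
    and wv: "Gar (sg C (Suc k)) w = Gar (tu C (Suc k)) v" and vu: "Gar (sg C (Suc k)) v = Gar (tu C (Suc k)) u"
  shows "(vcomp k (vcomp k w v) u, vcomp k w (vcomp k v u)) \<in> sim (Suc k)"
proof -
  define T where "T = ([Suc k, Suc k, Suc k], [k, k])"
  note T = ternary_sum[of k, folded T_def]
  obtain z where z: "z \<in> Gob (gs C T)" "Gar (gi C T 0) z = w" "Gar (gi C T 1) z = v" "Gar (gi C T 2) z = u"
    using ternary_elem[OF w v u wv vu] unfolding T_def by blast
  obtain f g where fg: "f \<in> hom C (Dg C (Suc k)) (gs C T)" "g \<in> hom C (Dg C (Suc k)) (gs C T)"
      "glob_parallel C (Suc k) f g"
    and f: "Gar f z = vcomp k (vcomp k w v) u" and g: "Gar g z = vcomp k w (vcomp k v u)"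
    using bracketings[of k, folded T_def] z by metis
  show ?thesis
    using parallel_lift[OF T(1) _ fg z(1)] T(2) unfolding f g by simp
qed

lemma cells_congruent_graph:
  "congruent_graph (Gob (Dg C k)) (Gob (Dg C (Suc k))) (sim (Suc k)) (Gar (sg C (Suc k))) (Gar (tu C (Suc k)))
     (vcomp k) (Gar (kap P k)) (Gar (ww P (Suc k) k))"
proof (unfold_locales)
  fix u assume u: "u \<in> Gob (Dg C (Suc k))"
  show "Gar (sg C (Suc k)) u \<in> Gob (Dg C k)" "Gar (tu C (Suc k)) u \<in> Gob (Dg C k)"
    using Gar_in[OF sg_hom u] Gar_in[OF tu_hom u] .
  show "Gar (ww P (Suc k) k) u \<in> Gob (Dg C (Suc k))" using Gar_in[OF ww_hom[OF lessI] u] .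
  show "Gar (sg C (Suc k)) (Gar (ww P (Suc k) k) u) = Gar (tu C (Suc k)) u"
    "Gar (tu C (Suc k)) (Gar (ww P (Suc k) k) u) = Gar (sg C (Suc k)) u"
    unfolding Gar_cmp[OF sg_hom ww_hom[OF lessI] u, symmetric] Gar_cmp[OF tu_hom ww_hom[OF lessI] u, symmetric]
      ww_sg ww_tu by simp_all
next
  fix x assume x: "x \<in> Gob (Dg C k)"
  show "Gar (kap P k) x \<in> Gob (Dg C (Suc k))" using Gar_in[OF kap_hom x] .
  show "Gar (sg C (Suc k)) (Gar (kap P k) x) = x" "Gar (tu C (Suc k)) (Gar (kap P k) x) = x"
    unfolding Gar_cmp[OF sg_hom kap_hom x, symmetric] Gar_cmp[OF tu_hom kap_hom x, symmetric]
      kap_sg kap_tu Gar_id[OF globe_ob x] by simp_all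
qed (rule sim_equiv sim_sg sim_tu vcomp_props vcomp_resp unit_right unit_left vcomp_assoc
       inv_left inv_right; assumption)+

end

theorem proposition4:
  fixes C :: "('o, 'm) gext" and P :: "'m pregrp"
    and Gob :: "'o \<Rightarrow> 'x set" and Gar :: "'m \<Rightarrow> 'x \<Rightarrow> 'x" and n :: nat
  assumes "globular_extension C"
    and "contractible C"
    and "pregroupoidal C P"
    and "infty_groupoid C Gob Gar"
    and "n \<ge> 1"
  shows "is_groupoid (Pi_obj C Gob n) (Pi_arr C Gob Gar n) (Pi_src C Gar n) (Pi_tgt C Gar n)
           (Pi_comp C P Gob Gar n) (Pi_id C P Gob Gar n)"
proof -
  obtain k where n: "n = Suc k" using \<open>n \<ge> 1\<close> by (cases n) auto
  interpret contractible_grpd C Gob Gar P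
    using assms(1-4) by unfold_locales
  interpret cells: congruent_graph "Gob (Dg C k)" "Gob (Dg C (Suc k))" "sim (Suc k)"
      "Gar (sg C (Suc k))" "Gar (tu C (Suc k))" "vcomp k" "Gar (kap P k)" "Gar (ww P (Suc k) k)"
    by (rule cells_congruent_graph)
  show ?thesis
    using cells.quotient_groupoid
    unfolding n Pi_obj_def Pi_arr_def Pi_src_def Pi_tgt_def Pi_comp_def Pi_id_def diff_Suc_1 .
qed

end
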